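(* There exist fair division instances with divisible goods, additive valuations and generalized assignment constraints in which the set of FEF allocations is not convex.
   Context: There are $n$ agents and $m$ divisible goods. An allocation is $x=(x_1,\dots,x_n)$ with $x_i\in[0,1]^m$ and $\sum_i x_{i,g}\le 1$ for each good $g$; the charity receives $x_{\mathrm{charity},g}=1-\sum_i x_{i,g}$. Valuations are additive: $v_i(y)=\sum_g y_g v_{i,g}$ with $v_{i,g}\ge0$. Generalized assignment constraints: each agent $i$ has sizes $s_i(g)\ge 0$ and a budget $B_i\ge0$, and a bundle $y\in[0,1]^m$ is feasible for $i$ iff $\sum_g s_i(g)y_g\le B_i$; an allocation is feasible if each $x_i$ is feasible for $i$. A feasible allocation is FEF if for all agents $i,j$, every $y\le x_j$ (componentwise) feasible for $i$ satisfies $v_i(x_i)\ge v_i(y)$, and likewise every $y\le x_{\mathrm{charity}}$ feasible for $i$ satisfies $v_i(x_i)\ge v_i(y)$. *)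

theory Defs
  imports "HOL-Analysis.Analysis"
begin

(* Agents 0..<n, goods 0..<m; x i g = fraction of good g to agent i;
   valuations v i g, sizes s i g, budgets B i. *)

definition unitbox :: "nat \<Rightarrow> (nat \<Rightarrow> real) \<Rightarrow> bool" where
  "unitbox m y \<longleftrightarrow> (\<forall>g<m. 0 \<le> y g \<and> y g \<le> 1)"

definition val :: "nat \<Rightarrow> (nat \<Rightarrow> real) \<Rightarrow> (nat \<Rightarrow> real) \<Rightarrow> real" where
  "val m vi y = (\<Sum>g<m. y g * vi g)"

definition feasible_bundle ::
  "nat \<Rightarrow> (nat \<Rightarrow> real) \<Rightarrow> real \<Rightarrow> (nat \<Rightarrow> real) \<Rightarrow> bool" where
  "feasible_bundle m si Bi y \<longleftrightarrow> unitbox m y \<and> (\<Sum>g<m. si g * y g) \<le> Bi"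

definition allocation :: "nat \<Rightarrow> nat \<Rightarrow> (nat \<Rightarrow> nat \<Rightarrow> real) \<Rightarrow> bool" where
  "allocation n m x \<longleftrightarrow> (\<forall>i<n. unitbox m (x i)) \<and> (\<forall>g<m. (\<Sum>i<n. x i g) \<le> 1)"

definition charity :: "nat \<Rightarrow> (nat \<Rightarrow> nat \<Rightarrow> real) \<Rightarrow> nat \<Rightarrow> real" where
  "charity n x g = 1 - (\<Sum>i<n. x i g)"

definition feasible_alloc ::
  "nat \<Rightarrow> nat \<Rightarrow> (nat \<Rightarrow> nat \<Rightarrow> real) \<Rightarrow> (nat \<Rightarrow> real) \<Rightarrow> (nat \<Rightarrow> nat \<Rightarrow> real) \<Rightarrow> bool" where
  "feasible_alloc n m s B x \<longleftrightarrow> allocation n m x \<and> (\<forall>i<n. feasible_bundle m (s i) (B i) (x i))"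

definition below :: "nat \<Rightarrow> (nat \<Rightarrow> real) \<Rightarrow> (nat \<Rightarrow> real) \<Rightarrow> bool" where
  "below m y z \<longleftrightarrow> (\<forall>g<m. y g \<le> z g)"

definition FEF ::
  "nat \<Rightarrow> nat \<Rightarrow> (nat \<Rightarrow> nat \<Rightarrow> real) \<Rightarrow> (nat \<Rightarrow> nat \<Rightarrow> real) \<Rightarrow> (nat \<Rightarrow> real)
   \<Rightarrow> (nat \<Rightarrow> nat \<Rightarrow> real) \<Rightarrow> bool" where
  "FEF n m v s B x \<longleftrightarrow> feasible_alloc n m s B x \<and>
     (\<forall>i<n. (\<forall>j<n. \<forall>y. below m y (x j) \<and> feasible_bundle m (s i) (B i) y
                       \<longrightarrow> val m (v i) (x i) \<ge> val m (v i) y) \<and>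
            (\<forall>y. below m y (charity n x) \<and> feasible_bundle m (s i) (B i) y
                       \<longrightarrow> val m (v i) (x i) \<ge> val m (v i) y))"

end

theory Submission
  imports Defs
begin

(* Two agents and two goods. Agent 0 values each good at 1, but only good 1 has positive
   size for it, so any feasible bundle contains at most half of good 1; agent 1 values
   nothing and is unconstrained. In both allocations below agent 0 holds half of good 0
   and no bundle it can see offers more than 1/2: in the first, agent 1 holds good 1 and
   the charity the rest of good 0; in the second, agent 1 holds the rest of good 0 and the
   charity good 1. In their midpoint agent 1 holds a quarter of good 0 and half of good 1,
   which agent 0 can take whole, for value 3/4. *)

lemma sum_lessThan_2: "(\<Sum>g<2. f g) = f 0 + f (1::nat)"
  by (simp add: numeral_2_eq_2)

lemma FEFI:
  assumes "feasible_alloc n m s B x"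
    and "\<And>i j y. i < n \<Longrightarrow> j < n \<Longrightarrow> below m y (x j) \<Longrightarrow> feasible_bundle m (s i) (B i) y
           \<Longrightarrow> val m (v i) y \<le> val m (v i) (x i)"
    and "\<And>i y. i < n \<Longrightarrow> below m y (charity n x) \<Longrightarrow> feasible_bundle m (s i) (B i) y
           \<Longrightarrow> val m (v i) y \<le> val m (v i) (x i)"
  shows "FEF n m v s B x"
  using assms unfolding FEF_def by blast

lemma FEF_envy_freeD:
  assumes "FEF n m v s B x" "i < n" "j < n" "below m y (x j)" "feasible_bundle m (s i) (B i) y"
  shows "val m (v i) y \<le> val m (v i) (x i)"
  using assms unfolding FEF_def by blast

definition ex_val :: "nat \<Rightarrow> nat \<Rightarrow> real" where
  "ex_val i g = (if i = 0 then 1 else 0)"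

definition ex_size :: "nat \<Rightarrow> nat \<Rightarrow> real" where
  "ex_size i g = (if i = 0 \<and> g = 1 then 1 else 0)"

definition ex_budget :: "nat \<Rightarrow> real" where
  "ex_budget i = (if i = 0 then 1/2 else 0)"

definition ex_alloc_a :: "nat \<Rightarrow> nat \<Rightarrow> real" where
  "ex_alloc_a i g = (if i = 0 \<and> g = 0 then 1/2 else if i = 1 \<and> g = 1 then 1 else 0)"

definition ex_alloc_b :: "nat \<Rightarrow> nat \<Rightarrow> real" where
  "ex_alloc_b i g = (if i < 2 \<and> g = 0 then 1/2 else 0)"

abbreviation ex_FEF :: "(nat \<Rightarrow> nat \<Rightarrow> real) \<Rightarrow> bool" where
  "ex_FEF \<equiv> FEF 2 2 ex_val ex_size ex_budget"

lemma ex_val_0: "val 2 (ex_val 0) y = y 0 + y 1"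
  by (simp add: val_def sum_lessThan_2 ex_val_def)

lemma ex_val_other: "i \<noteq> 0 \<Longrightarrow> val m (ex_val i) y = 0"
  by (simp add: val_def ex_val_def)

lemma ex_val_0_le_if_below:
  assumes "feasible_bundle 2 (ex_size 0) (ex_budget 0) y" "below 2 y z"
  shows "val 2 (ex_val 0) y \<le> z 0 + min (z 1) (1/2)"
proof -
  have "y 0 \<le> z 0" "y 1 \<le> z 1"
    using assms(2) by (auto simp: below_def)
  moreover have "y 1 \<le> 1/2"
    using assms(1) by (simp add: feasible_bundle_def sum_lessThan_2 ex_size_def ex_budget_def)
  ultimately show ?thesis
    by (simp add: ex_val_0)
qed

lemma ex_FEFI:
  assumes "feasible_alloc 2 2 ex_size ex_budget x"
    and "val 2 (ex_val 0) (x 0) = 1/2"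
    and "\<And>z. z \<in> {x 0, x 1, charity 2 x} \<Longrightarrow> z 0 + min (z 1) (1/2) \<le> 1/2"
  shows "ex_FEF x"
proof -
  have envy_free: "val 2 (ex_val i) y \<le> val 2 (ex_val i) (x i)"
    if "z \<in> {x 0, x 1, charity 2 x}" "below 2 y z"
       "feasible_bundle 2 (ex_size i) (ex_budget i) y" for i y z
  proof (cases "i = 0")
    case True
    then show ?thesis
      using ex_val_0_le_if_below[of y z] assms(2) assms(3)[of z] that by simp
  next
    case False
    then show ?thesis by (simp add: ex_val_other)
  qed
  have "j < 2 \<Longrightarrow> x j \<in> {x 0, x 1, charity 2 x}" for j
    by (auto simp: less_2_cases_iff)
  then show ?thesis
    using envy_free by (intro FEFI assms(1)) blast+
qed

lemma ex_FEF_alloc_a: "ex_FEF ex_alloc_a"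
  by (rule ex_FEFI)
     (auto simp: feasible_alloc_def allocation_def feasible_bundle_def unitbox_def charity_def
        ex_val_0 sum_lessThan_2 less_2_cases_iff ex_alloc_a_def ex_size_def ex_budget_def)

lemma ex_FEF_alloc_b: "ex_FEF ex_alloc_b"
  by (rule ex_FEFI)
     (auto simp: feasible_alloc_def allocation_def feasible_bundle_def unitbox_def charity_def
        ex_val_0 sum_lessThan_2 less_2_cases_iff ex_alloc_b_def ex_size_def ex_budget_def)

lemma ex_midpoint_not_FEF:
  "\<not> ex_FEF (\<lambda>i g. 1/2 * ex_alloc_a i g + (1 - 1/2) * ex_alloc_b i g)"
    (is "\<not> ex_FEF ?mid")
proof
  assume fef: "ex_FEF ?mid"
  have below: "below 2 (?mid 1) (?mid 1)"
    by (simp add: below_def)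
  have feasible: "feasible_bundle 2 (ex_size 0) (ex_budget 0) (?mid 1)"
    by (auto simp: feasible_bundle_def unitbox_def sum_lessThan_2 less_2_cases_iff
        ex_alloc_a_def ex_alloc_b_def ex_size_def ex_budget_def)
  have "val 2 (ex_val 0) (?mid 1) \<le> val 2 (ex_val 0) (?mid 0)"
    using FEF_envy_freeD[OF fef _ _ below feasible] by simp
  then show False
    by (simp add: ex_val_0 ex_alloc_a_def ex_alloc_b_def)
qed

theorem theorem2:
  shows "\<exists>(n::nat) (m::nat) (v::nat \<Rightarrow> nat \<Rightarrow> real) (s::nat \<Rightarrow> nat \<Rightarrow> real) (B::nat \<Rightarrow> real).
           (\<forall>i<n. \<forall>g<m. v i g \<ge> 0 \<and> s i g \<ge> 0) \<and> (\<forall>i<n. B i \<ge> 0) \<and>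
           \<not> (\<forall>x y (t::real). FEF n m v s B x \<and> FEF n m v s B y \<and> 0 \<le> t \<and> t \<le> 1 \<longrightarrow>
                 FEF n m v s B (\<lambda>i g. t * x i g + (1 - t) * y i g))"
proof (intro exI conjI)
  show "\<forall>i<2. \<forall>g<2. ex_val i g \<ge> 0 \<and> ex_size i g \<ge> 0"
    by (simp add: ex_val_def ex_size_def)
  show "\<forall>i<2. ex_budget i \<ge> 0"
    by (simp add: ex_budget_def)
  show "\<not> (\<forall>x y (t::real). ex_FEF x \<and> ex_FEF y \<and> 0 \<le> t \<and> t \<le> 1 \<longrightarrow>
                 ex_FEF (\<lambda>i g. t * x i g + (1 - t) * y i g))"
  proof
    assume "\<forall>x y (t::real). ex_FEF x \<and> ex_FEF y \<and> 0 \<le> t \<and> t \<le> 1 \<longrightarrow>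
              ex_FEF (\<lambda>i g. t * x i g + (1 - t) * y i g)"
    from this[rule_format, of ex_alloc_a ex_alloc_b "1/2"] show False
      using ex_FEF_alloc_a ex_FEF_alloc_b ex_midpoint_not_FEF by simp
  qed
qed

end
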